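(* Let $\{(\Gamma_t,\theta_t)\}_{t\in[0,\underline t)}$ solve the framed curvature flow. Then $$\frac{d}{dt}L(\Gamma_t)=-\int_{\Gamma_t}\kappa\psi_1\,ds,\qquad \frac{d}{dt}A(\Sigma_t)=\int_{\Gamma_t}\kappa\,ds .$$
   Context: $S^1=\mathbb{R}/2\pi\mathbb{Z}$; closed curves $\Gamma_t$ parametrized by $\gamma(t,\cdot):S^1\to\mathbb{R}^3$, $g=\|\partial_u\gamma\|$, $ds=g\,du$, $\partial_s=g^{-1}\partial_u$, $L(\Gamma_t)$ length; Frenet frame $T,N,B$, curvature $\kappa$; angle function $\theta$, $\nu_\theta=\cos\theta N+\sin\theta B$, $\psi_1=\kappa\cos\theta$. Framed curvature flow: $\partial_t\gamma=\kappa\nu_\theta$, $\partial_t\theta=\upsilon_\theta$ with some $\upsilon_\theta\in\mathcal C^1$. The trajectory surface $\Sigma_t=\bigcup_{t'\in[0,t)}\Gamma_{t'}$ is parametrized by $(t',u)\mapsto\gamma(t',u)$, and $A(\Sigma_t)=\int_0^t\int_{S^1}g\,\kappa\,du\,dt'$ is its area. *)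

theory Defs
  imports "HOL-Analysis.Analysis" "HOL-Analysis.Cross3"
begin

unbundle no cross3_syntax

text \<open>A time-dependent closed curve in R^3 is modelled as
  gam :: real \<Rightarrow> real \<Rightarrow> real^3, with gam t u the point with time t and
  parameter u; closedness = 2*pi periodicity in u (S^1 = R / 2 pi Z).
  Time ranges over an interval I (here I = {0..<tbar}); time derivatives
  are taken within I (one-sided at t = 0).\<close>

definition partial_u :: "(real \<Rightarrow> real \<Rightarrow> 'a::real_normed_vector) \<Rightarrow> real \<Rightarrow> real \<Rightarrow> 'a" where
  "partial_u f t u = vector_derivative (\<lambda>v. f t v) (at u)"

definition partial_t :: "real set \<Rightarrow> (real \<Rightarrow> real \<Rightarrow> 'a::real_normed_vector) \<Rightarrow> real \<Rightarrow> real \<Rightarrow> 'a" where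
  "partial_t I f t u = vector_derivative (\<lambda>s. f s u) (at t within I)"

definition C1_flow :: "real set \<Rightarrow> (real \<Rightarrow> real \<Rightarrow> 'a::real_normed_vector) \<Rightarrow> bool" where
  "C1_flow I f \<longleftrightarrow>
     (\<forall>t\<in>I. \<forall>u. (\<lambda>s. f s u) differentiable (at t within I) \<and> (\<lambda>v. f t v) differentiable (at u)) \<and>
     continuous_on (I \<times> UNIV) (\<lambda>(t,u). f t u) \<and>
     continuous_on (I \<times> UNIV) (\<lambda>(t,u). partial_t I f t u) \<and>
     continuous_on (I \<times> UNIV) (\<lambda>(t,u). partial_u f t u)"

definition speed :: "(real \<Rightarrow> real \<Rightarrow> real^3) \<Rightarrow> real \<Rightarrow> real \<Rightarrow> real" where
  "speed gam t u = norm (partial_u gam t u)"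

definition tangent :: "(real \<Rightarrow> real \<Rightarrow> real^3) \<Rightarrow> real \<Rightarrow> real \<Rightarrow> real^3" where
  "tangent gam t u = (1 / speed gam t u) *\<^sub>R partial_u gam t u"

definition curvature :: "(real \<Rightarrow> real \<Rightarrow> real^3) \<Rightarrow> real \<Rightarrow> real \<Rightarrow> real" where
  "curvature gam t u = norm ((1 / speed gam t u) *\<^sub>R partial_u (tangent gam) t u)"

definition normal :: "(real \<Rightarrow> real \<Rightarrow> real^3) \<Rightarrow> real \<Rightarrow> real \<Rightarrow> real^3" where
  "normal gam t u = (1 / (speed gam t u * curvature gam t u)) *\<^sub>R partial_u (tangent gam) t u"

definition binormal :: "(real \<Rightarrow> real \<Rightarrow> real^3) \<Rightarrow> real \<Rightarrow> real \<Rightarrow> real^3" where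
  "binormal gam t u = cross3 (tangent gam t u) (normal gam t u)"

definition nu_theta :: "(real \<Rightarrow> real \<Rightarrow> real^3) \<Rightarrow> (real \<Rightarrow> real \<Rightarrow> real) \<Rightarrow> real \<Rightarrow> real \<Rightarrow> real^3" where
  "nu_theta gam \<theta> t u = cos (\<theta> t u) *\<^sub>R normal gam t u + sin (\<theta> t u) *\<^sub>R binormal gam t u"

definition psi1 :: "(real \<Rightarrow> real \<Rightarrow> real^3) \<Rightarrow> (real \<Rightarrow> real \<Rightarrow> real) \<Rightarrow> real \<Rightarrow> real \<Rightarrow> real" where
  "psi1 gam \<theta> t u = curvature gam t u * cos (\<theta> t u)"

definition curve_length :: "(real \<Rightarrow> real \<Rightarrow> real^3) \<Rightarrow> real \<Rightarrow> real" where
  "curve_length gam t = integral {0..2*pi} (\<lambda>u. speed gam t u)"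

definition traj_area :: "(real \<Rightarrow> real \<Rightarrow> real^3) \<Rightarrow> real \<Rightarrow> real" where
  "traj_area gam t = integral {0..t} (\<lambda>t'. integral {0..2*pi} (\<lambda>u. speed gam t' u * curvature gam t' u))"

text \<open>Framed curvature flow on [0, tbar): closed regular curves with positive curvature
  (so that the Frenet frame exists), smooth enough, d gam/dt = kappa nu_theta,
  d theta/dt = upsilon with upsilon C^1.\<close>
definition framed_curvature_flow ::
  "real \<Rightarrow> (real \<Rightarrow> real \<Rightarrow> real^3) \<Rightarrow> (real \<Rightarrow> real \<Rightarrow> real) \<Rightarrow> (real \<Rightarrow> real \<Rightarrow> real) \<Rightarrow> bool" where
  "framed_curvature_flow tbar gam \<theta> \<upsilon> \<longleftrightarrow>
     (let I = {0..<tbar} in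
       0 < tbar \<and>
       C1_flow I gam \<and> C1_flow I (partial_u gam) \<and> C1_flow I (partial_u (partial_u gam)) \<and>
       C1_flow I \<theta> \<and> C1_flow I \<upsilon> \<and>
       (\<forall>t\<in>I. \<forall>u. gam t (u + 2*pi) = gam t u \<and> \<theta> t (u + 2*pi) = \<theta> t u) \<and>
       (\<forall>t\<in>I. \<forall>u. speed gam t u > 0 \<and> curvature gam t u > 0) \<and>
       (\<forall>t\<in>I. \<forall>u. ((\<lambda>s. gam s u) has_vector_derivative
                      (curvature gam t u *\<^sub>R nu_theta gam \<theta> t u)) (at t within I)) \<and>
       (\<forall>t\<in>I. \<forall>u. ((\<lambda>s. \<theta> s u) has_real_derivative \<upsilon> t u) (at t within I)))"

end

theory Submission
  imports Defs
begin

text \<open>Differentiating under the integral sign, \<open>L' = \<integral> T \<bullet> \<partial>\<^sub>t\<partial>\<^sub>u\<gamma> du\<close>. Mixed partials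
  commute, so \<open>\<partial>\<^sub>t\<partial>\<^sub>u\<gamma> = \<partial>\<^sub>u(\<kappa> \<nu>\<^sub>\<theta>)\<close>, and integrating by parts over the closed curve gives
  \<open>L' = - \<integral> \<partial>\<^sub>uT \<bullet> \<kappa> \<nu>\<^sub>\<theta> du = - \<integral> \<kappa> \<psi>\<^sub>1 g du\<close>, because \<open>\<partial>\<^sub>uT = g \<kappa> N\<close> and
  \<open>N \<bullet> \<nu>\<^sub>\<theta> = cos \<theta>\<close>. The area formula is the fundamental theorem of calculus, the integrand
  \<open>g \<kappa>\<close> being continuous in \<open>(t, u)\<close>.\<close>

lemma at_within_Ico_neq_bot: "a \<le> t \<Longrightarrow> t < (b::real) \<Longrightarrow> at t within {a..<b} \<noteq> bot"
  using trivial_limit_within[of t "{a..<b}"] by simp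

lemma continuous_on_slice:
  assumes "continuous_on (I \<times> UNIV) (\<lambda>(t, u). f t u)" "t \<in> I"
  shows "continuous_on S (\<lambda>u. f t u)"
proof -
  have "continuous_on S (\<lambda>u. (t, u))" by (intro continuous_intros)
  moreover have "(\<lambda>u. (t, u)) ` S \<subseteq> I \<times> UNIV" using assms(2) by auto
  ultimately show ?thesis
    using continuous_on_compose2[OF assms(1), of S "\<lambda>u. (t, u)"] by auto
qed

lemma has_vector_derivative_shift_iff:
  fixes f :: "real \<Rightarrow> 'a::real_normed_vector"
  shows "(f has_vector_derivative D) (at (x + z)) \<longleftrightarrow> ((\<lambda>x. f (x + z)) has_vector_derivative D) (at x)"
proof -
  have "(g \<longlongrightarrow> 0) (at (x + z)) \<longleftrightarrow> ((\<lambda>y. g (y + z)) \<longlongrightarrow> 0) (at x)" for g :: "real \<Rightarrow> 'a"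
    using LIM_offset[where f=g and a="x + z" and k=z] LIM_offset[where f="\<lambda>y. g (y + z)" and a=x and k="-z"]
    by auto
  from this[of "\<lambda>y. (1 / \<bar>y - (x + z)\<bar>) *\<^sub>R (f y - (f (x + z) + (y - (x + z)) *\<^sub>R D))"]
  show ?thesis
    by (simp add: has_vector_derivative_def has_derivative_at2 bounded_linear_scaleR_left algebra_simps)
qed

lemma vector_derivative_at_periodic:
  fixes h :: "real \<Rightarrow> 'a::real_normed_vector"
  assumes "\<And>v. h (v + p) = h v"
  shows "vector_derivative h (at (u + p)) = vector_derivative h (at u)"
  using has_vector_derivative_shift_iff[of h _ u p] assms unfolding vector_derivative_def by simp

lemma partial_u_periodic:
  assumes "\<And>v. f t (v + p) = f t v"
  shows "partial_u f t (u + p) = partial_u f t u"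
  unfolding partial_u_def by (rule vector_derivative_at_periodic) (use assms in simp)

lemma has_real_derivative_norm:
  fixes f :: "real \<Rightarrow> 'a::real_inner"
  assumes "(f has_vector_derivative f') (at x within S)" "f x \<noteq> 0"
  shows "((\<lambda>s. norm (f s)) has_real_derivative (f x \<bullet> f') / norm (f x)) (at x within S)"
proof -
  have "((\<lambda>s. norm (f s)) has_derivative (\<lambda>h. (h *\<^sub>R f') \<bullet> sgn (f x))) (at x within S)"
    using has_derivative_compose[OF assms(1)[unfolded has_vector_derivative_def] has_derivative_norm[OF assms(2)]]
    by (simp add: o_def)
  moreover have "(\<lambda>h. (h *\<^sub>R f') \<bullet> sgn (f x)) = (*) ((f x \<bullet> f') / norm (f x))"
    by (auto simp: sgn_div_norm inner_commute field_simps)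
  ultimately show ?thesis
    unfolding has_field_derivative_def by simp
qed

lemma has_vector_derivative_normalize:
  fixes f :: "real \<Rightarrow> 'a::real_inner"
  assumes f: "(f has_vector_derivative f') (at x within S)" and nz: "f x \<noteq> 0"
  shows "((\<lambda>s. (1 / norm (f s)) *\<^sub>R f s) has_vector_derivative
           (1 / norm (f x)) *\<^sub>R f' - ((f x \<bullet> f') / norm (f x) ^ 3) *\<^sub>R f x) (at x within S)"
proof -
  have "((\<lambda>s. inverse (norm (f s))) has_real_derivative - ((f x \<bullet> f') / norm (f x) ^ 3))
          (at x within S)"
    using DERIV_inverse_fun[OF has_real_derivative_norm[OF f nz]] nz
    by (simp add: power3_eq_cube power2_eq_square field_simps)
  from has_vector_derivative_scaleR[OF this f] show ?thesis
    using nz by (simp add: divide_inverse power3_eq_cube power2_eq_square algebra_simps)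
qed

lemma integral_inner_by_parts_periodic:
  fixes f g :: "real \<Rightarrow> 'a::real_inner"
  assumes "a \<le> b"
    and f: "\<And>x. x \<in> {a..b} \<Longrightarrow> (f has_vector_derivative f' x) (at x)"
    and g: "\<And>x. x \<in> {a..b} \<Longrightarrow> (g has_vector_derivative g' x) (at x)"
    and periodic: "f b = f a" "g b = g a"
    and integrable: "(\<lambda>x. f x \<bullet> g' x) integrable_on {a..b}"
  shows "integral {a..b} (\<lambda>x. f' x \<bullet> g x) = - integral {a..b} (\<lambda>x. f x \<bullet> g' x)"
proof -
  have "((\<lambda>x. f' x \<bullet> g x) has_integral - integral {a..b} (\<lambda>x. f x \<bullet> g' x)) {a..b}"
  proof (rule integration_by_parts[OF bounded_bilinear_inner \<open>a \<le> b\<close>])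
    show "continuous_on {a..b} f" "continuous_on {a..b} g"
      using f g by (meson continuous_at_imp_continuous_on has_vector_derivative_continuous)+
    show "((\<lambda>x. f x \<bullet> g' x) has_integral
            f b \<bullet> g b - f a \<bullet> g a - - integral {a..b} (\<lambda>x. f x \<bullet> g' x)) {a..b}"
      using integrable periodic by (simp add: integrable_integral)
  qed (use f g in auto)
  then show ?thesis
    by (rule integral_unique)
qed

lemma integral_has_real_derivative_Ico:
  assumes "continuous_on {a..<b} g" "t \<in> {a..<b}"
  shows "((\<lambda>x. integral {a..x} g) has_real_derivative g t) (at t within {a..<b})"
proof -
  define c where "c = (t + b) / 2"
  have c: "t < c" "c < b" using assms(2) by (auto simp: c_def)
  have "continuous_on {a..c} g"
    by (rule continuous_on_subset[OF assms(1)]) (use c in auto)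
  then have "((\<lambda>x. integral {a..x} g) has_real_derivative g t) (at t within {a..c})"
    by (rule integral_has_real_derivative) (use assms(2) c in auto)
  moreover have "at t within {a..c} = at t within {a..<b}"
    by (rule at_within_nhd[where S="{a - 1<..<c}"]) (use assms(2) c in auto)
  ultimately show ?thesis
    by simp
qed

text \<open>Differentiate \<open>f s w - f s a = \<integral>\<^sub>a\<^sup>w f_u s\<close> in \<open>s\<close> under the integral sign.\<close>
lemma integral_mixed_partial:
  fixes f :: "real \<Rightarrow> real \<Rightarrow> 'a::banach"
  assumes I: "convex I" "t \<in> I" "at t within I \<noteq> bot"
    and f_u: "\<And>s v. s \<in> I \<Longrightarrow> ((\<lambda>v. f s v) has_vector_derivative f_u s v) (at v)"
    and f_ut: "\<And>s v. s \<in> I \<Longrightarrow> ((\<lambda>s. f_u s v) has_vector_derivative f_ut s v) (at s within I)"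
    and cont: "continuous_on (I \<times> UNIV) (\<lambda>(s, v). f_ut s v)"
    and f_t: "\<And>v. ((\<lambda>s. f s v) has_vector_derivative f_t v) (at t within I)"
    and "a \<le> w"
  shows "integral {a..w} (f_ut t) = f_t w - f_t a"
proof -
  have ftc: "(f_u s has_integral f s w - f s a) {a..w}" if "s \<in> I" for s
    by (rule fundamental_theorem_of_calculus)
       (use that f_u \<open>a \<le> w\<close> in \<open>auto intro: has_vector_derivative_at_within\<close>)
  have "((\<lambda>s. integral (cbox a w) (f_u s)) has_vector_derivative integral (cbox a w) (f_ut t))
          (at t within I)"
  proof (rule leibniz_rule_vector_derivative)
    show "f_u s integrable_on cbox a w" if "s \<in> I" for s
      using ftc[OF that] unfolding cbox_interval by (rule has_integral_integrable)
    show "continuous_on (I \<times> cbox a w) (\<lambda>(s, v). f_ut s v)"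
      by (rule continuous_on_subset[OF cont]) auto
  qed (use f_ut I in auto)
  moreover have "f s w - f s a = integral {a..w} (f_u s)" if "s \<in> I" for s
    using ftc[OF that] by (rule integral_unique[symmetric])
  ultimately have "((\<lambda>s. f s w - f s a) has_vector_derivative integral {a..w} (f_ut t)) (at t within I)"
    unfolding cbox_interval by (rule has_vector_derivative_transform[OF \<open>t \<in> I\<close>, rotated])
  moreover have "((\<lambda>s. f s w - f s a) has_vector_derivative f_t w - f_t a) (at t within I)"
    by (intro has_vector_derivative_diff f_t)
  ultimately show ?thesis
    by (rule vector_derivative_unique_within[OF I(3)])
qed

lemma has_vector_derivative_mixed_partials:
  fixes f :: "real \<Rightarrow> real \<Rightarrow> 'a::banach"
  assumes I: "convex I" "t \<in> I" "at t within I \<noteq> bot"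
    and f_u: "\<And>s v. s \<in> I \<Longrightarrow> ((\<lambda>v. f s v) has_vector_derivative f_u s v) (at v)"
    and f_ut: "\<And>s v. s \<in> I \<Longrightarrow> ((\<lambda>s. f_u s v) has_vector_derivative f_ut s v) (at s within I)"
    and cont: "continuous_on (I \<times> UNIV) (\<lambda>(s, v). f_ut s v)"
    and f_t: "\<And>v. ((\<lambda>s. f s v) has_vector_derivative f_t v) (at t within I)"
  shows "(f_t has_vector_derivative f_ut t u) (at u)"
proof -
  define a where "a = u - 1"
  have "continuous_on {a..u + 1} (f_ut t)"
    by (rule continuous_on_slice[OF cont I(2)])
  then have "((\<lambda>w. integral {a..w} (f_ut t)) has_vector_derivative f_ut t u) (at u within {a..u + 1})"
    by (rule integral_has_vector_derivative) (auto simp: a_def)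
  moreover have "at u within {a..u + 1} = at u"
    by (rule at_within_interior) (auto simp: a_def)
  ultimately have "((\<lambda>w. integral {a..w} (f_ut t)) has_vector_derivative f_ut t u) (at u)"
    by simp
  then have "((\<lambda>w. f_t a + integral {a..w} (f_ut t)) has_vector_derivative f_ut t u) (at u)"
    using has_vector_derivative_add[OF has_vector_derivative_const] by fastforce
  then show ?thesis
  proof (rule has_vector_derivative_transform_within_open[where S="{a<..}"])
    show "f_t a + integral {a..w} (f_ut t) = f_t w" if "w \<in> {a<..}" for w
      using integral_mixed_partial[OF assms, of a w] that by simp
  qed (auto simp: a_def)
qed

lemma
  assumes "C1_flow I f" "t \<in> I"
  shows C1_flow_has_partial_u: "((\<lambda>v. f t v) has_vector_derivative partial_u f t u) (at u)"
    and C1_flow_has_partial_t: "((\<lambda>s. f s u) has_vector_derivative partial_t I f t u) (at t within I)"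
  using assms unfolding C1_flow_def partial_u_def partial_t_def by (auto simp: vector_derivative_works)

lemma partial_u_tangent_inner_curvature_nu_theta:
  assumes "speed gam t u > 0" "curvature gam t u > 0"
  shows "partial_u (tangent gam) t u \<bullet> (curvature gam t u *\<^sub>R nu_theta gam \<theta> t u)
           = curvature gam t u * psi1 gam \<theta> t u * speed gam t u"
proof -
  define X where "X = partial_u (tangent gam) t u"
  define g where "g = speed gam t u"
  define k where "k = curvature gam t u"
  define N where "N = normal gam t u"
  have g: "g > 0" and k: "k > 0"
    using assms by (simp_all add: g_def k_def)
  have "norm X = g * k"
    using g unfolding k_def curvature_def X_def g_def by simp
  moreover have N: "N = (1 / (g * k)) *\<^sub>R X"
    unfolding N_def normal_def X_def g_def k_def by simp
  ultimately have "norm N = 1"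
    using g k by simp
  then have NN: "N \<bullet> N = 1"
    by (simp add: dot_square_norm)
  have NB: "N \<bullet> binormal gam t u = 0"
    unfolding binormal_def N_def by (simp add: dot_cross_self)
  have "X = (g * k) *\<^sub>R N"
    using N g k by simp
  then have "X \<bullet> (k *\<^sub>R nu_theta gam \<theta> t u)
      = g * k * k * (cos (\<theta> t u) * (N \<bullet> N) + sin (\<theta> t u) * (N \<bullet> binormal gam t u))"
    unfolding nu_theta_def N_def by (simp add: inner_add_right algebra_simps)
  also have "\<dots> = k * (k * cos (\<theta> t u)) * g"
    using NN NB by simp
  finally show ?thesis
    unfolding X_def k_def g_def psi1_def .
qed

locale framed_flow =
  fixes tbar :: real and gam :: "real \<Rightarrow> real \<Rightarrow> real^3" and \<theta> \<upsilon> :: "real \<Rightarrow> real \<Rightarrow> real"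
  assumes flow: "framed_curvature_flow tbar gam \<theta> \<upsilon>"
begin

lemma
  shows C1_gam: "C1_flow {0..<tbar} gam"
    and C1_partial_u_gam: "C1_flow {0..<tbar} (partial_u gam)"
    and gam_periodic: "t \<in> {0..<tbar} \<Longrightarrow> gam t (u + 2 * pi) = gam t u"
    and speed_pos: "t \<in> {0..<tbar} \<Longrightarrow> speed gam t u > 0"
    and curvature_pos: "t \<in> {0..<tbar} \<Longrightarrow> curvature gam t u > 0"
    and gam_has_partial_t: "t \<in> {0..<tbar} \<Longrightarrow>
      ((\<lambda>s. gam s u) has_vector_derivative curvature gam t u *\<^sub>R nu_theta gam \<theta> t u) (at t within {0..<tbar})"
  using flow by (simp_all add: framed_curvature_flow_def Let_def)

lemma partial_u_gam_nonzero: "t \<in> {0..<tbar} \<Longrightarrow> partial_u gam t u \<noteq> 0"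
  using speed_pos[of t u] by (auto simp: speed_def)

lemma continuous_partial_u_gam: "continuous_on ({0..<tbar} \<times> UNIV) (\<lambda>(t, u). partial_u gam t u)"
  using C1_gam unfolding C1_flow_def by simp

lemma continuous_partial_uu_gam:
  "continuous_on ({0..<tbar} \<times> UNIV) (\<lambda>(t, u). partial_u (partial_u gam) t u)"
  using C1_partial_u_gam unfolding C1_flow_def by simp

lemma continuous_partial_tu_gam:
  "continuous_on ({0..<tbar} \<times> UNIV) (\<lambda>(t, u). partial_t {0..<tbar} (partial_u gam) t u)"
  using C1_partial_u_gam unfolding C1_flow_def by simp

lemma continuous_tangent: "continuous_on ({0..<tbar} \<times> UNIV) (\<lambda>(t, u). tangent gam t u)"
  unfolding tangent_def speed_def case_prod_beta
  by (intro continuous_intros continuous_partial_u_gam[unfolded case_prod_beta])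
     (auto simp: partial_u_gam_nonzero)

lemma tangent_periodic: "t \<in> {0..<tbar} \<Longrightarrow> tangent gam t (u + 2 * pi) = tangent gam t u"
  using partial_u_periodic[of gam t "2 * pi" u] gam_periodic
  by (simp add: tangent_def speed_def)

text \<open>\<open>\<kappa> \<nu>\<^sub>\<theta>\<close> is periodic because it is the time derivative of a periodic family.\<close>
lemma velocity_periodic:
  assumes t: "t \<in> {0..<tbar}"
  shows "curvature gam t (u + 2 * pi) *\<^sub>R nu_theta gam \<theta> t (u + 2 * pi)
           = curvature gam t u *\<^sub>R nu_theta gam \<theta> t u"
proof (rule vector_derivative_unique_within)
  show "at t within {0..<tbar} \<noteq> bot"
    using t by (simp add: at_within_Ico_neq_bot)
  show "((\<lambda>s. gam s u) has_vector_derivative curvature gam t (u + 2 * pi) *\<^sub>R nu_theta gam \<theta> t (u + 2 * pi))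
          (at t within {0..<tbar})"
    by (rule has_vector_derivative_transform[OF t _ gam_has_partial_t[OF t]]) (simp add: gam_periodic)
qed (rule gam_has_partial_t[OF t])

lemma tangent_has_derivative:
  assumes t: "t \<in> {0..<tbar}"
  shows "((\<lambda>v. tangent gam t v) has_vector_derivative
           (1 / speed gam t u) *\<^sub>R partial_u (partial_u gam) t u
           - ((partial_u gam t u \<bullet> partial_u (partial_u gam) t u) / speed gam t u ^ 3) *\<^sub>R partial_u gam t u)
         (at u)"
  unfolding tangent_def speed_def
  by (rule has_vector_derivative_normalize)
     (use C1_flow_has_partial_u[OF C1_partial_u_gam t] partial_u_gam_nonzero[OF t] in auto)

lemma partial_u_tangent:
  "t \<in> {0..<tbar} \<Longrightarrow> partial_u (tangent gam) t u
     = (1 / speed gam t u) *\<^sub>R partial_u (partial_u gam) t u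
       - ((partial_u gam t u \<bullet> partial_u (partial_u gam) t u) / speed gam t u ^ 3) *\<^sub>R partial_u gam t u"
  unfolding partial_u_def[of "tangent gam"] using tangent_has_derivative vector_derivative_at by blast

lemma tangent_has_partial_u:
  "t \<in> {0..<tbar} \<Longrightarrow> ((\<lambda>v. tangent gam t v) has_vector_derivative partial_u (tangent gam) t u) (at u)"
  using tangent_has_derivative partial_u_tangent by simp

lemma continuous_speed_mult_curvature:
  "continuous_on ({0..<tbar} \<times> UNIV) (\<lambda>(t, u). speed gam t u * curvature gam t u)"
proof -
  define G where "G p = partial_u gam (fst p) (snd p)" for p
  define G2 where "G2 p = partial_u (partial_u gam) (fst p) (snd p)" for p
  have "continuous_on ({0..<tbar} \<times> UNIV)
          (\<lambda>p. norm ((1 / norm (G p)) *\<^sub>R G2 p - ((G p \<bullet> G2 p) / norm (G p) ^ 3) *\<^sub>R G p))"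
    unfolding G_def G2_def
    by (intro continuous_intros continuous_partial_u_gam[unfolded case_prod_beta]
          continuous_partial_uu_gam[unfolded case_prod_beta])
       (auto simp: partial_u_gam_nonzero)
  then show ?thesis
  proof (rule continuous_on_cong[THEN iffD1, OF refl, rotated])
    fix p :: "real \<times> real"
    assume "p \<in> {0..<tbar} \<times> UNIV"
    then have "fst p \<in> {0..<tbar}"
      by auto
    then show "norm ((1 / norm (G p)) *\<^sub>R G2 p - ((G p \<bullet> G2 p) / norm (G p) ^ 3) *\<^sub>R G p)
        = (case p of (t, u) \<Rightarrow> speed gam t u * curvature gam t u)"
      using speed_pos[of "fst p" "snd p"]
      by (simp add: case_prod_beta curvature_def partial_u_tangent G_def G2_def speed_def)
  qed
qed

lemma velocity_has_partial_u:
  assumes t: "t \<in> {0..<tbar}"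
  shows "((\<lambda>v. curvature gam t v *\<^sub>R nu_theta gam \<theta> t v) has_vector_derivative
           partial_t {0..<tbar} (partial_u gam) t u) (at u)"
  using has_vector_derivative_mixed_partials[OF _ t _ C1_flow_has_partial_u[OF C1_gam]
      C1_flow_has_partial_t[OF C1_partial_u_gam] continuous_partial_tu_gam gam_has_partial_t[OF t]]
  using t by (simp add: convex_real_interval at_within_Ico_neq_bot)

lemma curve_length_has_derivative_tangent:
  assumes t: "t \<in> {0..<tbar}"
  shows "(curve_length gam has_real_derivative
           integral {0..2 * pi} (\<lambda>u. tangent gam t u \<bullet> partial_t {0..<tbar} (partial_u gam) t u))
         (at t within {0..<tbar})"
proof -
  have "((\<lambda>s. integral (cbox 0 (2 * pi)) (\<lambda>u. speed gam s u)) has_real_derivative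
          integral (cbox 0 (2 * pi)) (\<lambda>u. tangent gam t u \<bullet> partial_t {0..<tbar} (partial_u gam) t u))
        (at t within {0..<tbar})"
  proof (rule leibniz_rule_field_derivative)
    show "((\<lambda>s. speed gam s u) has_real_derivative
            tangent gam s u \<bullet> partial_t {0..<tbar} (partial_u gam) s u) (at s within {0..<tbar})"
      if "s \<in> {0..<tbar}" for s u
      using has_real_derivative_norm[OF C1_flow_has_partial_t[OF C1_partial_u_gam that]
          partial_u_gam_nonzero[OF that]]
      by (simp add: speed_def tangent_def)
    show "(\<lambda>u. speed gam s u) integrable_on cbox 0 (2 * pi)" if "s \<in> {0..<tbar}" for s
      unfolding speed_def cbox_interval
      by (intro integrable_continuous_interval continuous_intros
          continuous_on_slice[OF continuous_partial_u_gam that])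
    show "continuous_on ({0..<tbar} \<times> cbox 0 (2 * pi))
            (\<lambda>(s, u). tangent gam s u \<bullet> partial_t {0..<tbar} (partial_u gam) s u)"
      unfolding case_prod_beta
      by (intro continuous_intros continuous_on_subset[OF continuous_tangent[unfolded case_prod_beta]]
          continuous_on_subset[OF continuous_partial_tu_gam[unfolded case_prod_beta]]) auto
  qed (use t in \<open>auto simp: convex_real_interval\<close>)
  then show ?thesis
    unfolding curve_length_def[abs_def] by (simp add: cbox_interval)
qed

lemma integral_tangent_inner_partial_tu:
  assumes t: "t \<in> {0..<tbar}"
  shows "integral {0..2 * pi} (\<lambda>u. tangent gam t u \<bullet> partial_t {0..<tbar} (partial_u gam) t u)
       = - integral {0..2 * pi} (\<lambda>u. curvature gam t u * psi1 gam \<theta> t u * speed gam t u)"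
proof -
  have by_parts: "integral {0..2 * pi}
        (\<lambda>u. partial_u (tangent gam) t u \<bullet> (curvature gam t u *\<^sub>R nu_theta gam \<theta> t u))
      = - integral {0..2 * pi} (\<lambda>u. tangent gam t u \<bullet> partial_t {0..<tbar} (partial_u gam) t u)"
  proof (rule integral_inner_by_parts_periodic)
    show "(\<lambda>u. tangent gam t u \<bullet> partial_t {0..<tbar} (partial_u gam) t u) integrable_on {0..2 * pi}"
      by (intro integrable_continuous_interval continuous_intros
          continuous_on_slice[OF continuous_tangent t] continuous_on_slice[OF continuous_partial_tu_gam t])
  qed (use t tangent_has_partial_u velocity_has_partial_u tangent_periodic[of t 0] velocity_periodic[of t 0]
      in auto)
  have integrand: "(\<lambda>u. partial_u (tangent gam) t u \<bullet> (curvature gam t u *\<^sub>R nu_theta gam \<theta> t u))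
      = (\<lambda>u. curvature gam t u * psi1 gam \<theta> t u * speed gam t u)"
    using partial_u_tangent_inner_curvature_nu_theta speed_pos[OF t] curvature_pos[OF t] by blast
  from by_parts[unfolded integrand] show ?thesis
    by linarith
qed

lemma curve_length_has_derivative:
  "t \<in> {0..<tbar} \<Longrightarrow> (curve_length gam has_real_derivative
     - integral {0..2 * pi} (\<lambda>u. curvature gam t u * psi1 gam \<theta> t u * speed gam t u))
     (at t within {0..<tbar})"
  using curve_length_has_derivative_tangent integral_tangent_inner_partial_tu by simp

lemma traj_area_has_derivative:
  assumes t: "t \<in> {0..<tbar}"
  shows "(traj_area gam has_real_derivative integral {0..2 * pi} (\<lambda>u. curvature gam t u * speed gam t u))
         (at t within {0..<tbar})"
proof -
  have "continuous_on ({0..<tbar} \<times> cbox 0 (2 * pi)) (\<lambda>(s, u). speed gam s u * curvature gam s u)"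
    by (rule continuous_on_subset[OF continuous_speed_mult_curvature]) auto
  from integral_continuous_on_param[OF this]
  have "continuous_on {0..<tbar} (\<lambda>s. integral {0..2 * pi} (\<lambda>u. speed gam s u * curvature gam s u))"
    by (simp add: cbox_interval)
  from integral_has_real_derivative_Ico[OF this t] show ?thesis
    unfolding traj_area_def by (simp add: mult.commute)
qed

end

theorem mainTheorem7:
  fixes tbar :: real and gam :: "real \<Rightarrow> real \<Rightarrow> real^3"
    and \<theta> \<upsilon> :: "real \<Rightarrow> real \<Rightarrow> real"
  assumes "framed_curvature_flow tbar gam \<theta> \<upsilon>"
    and "t \<in> {0..<tbar}"
  shows "((\<lambda>s. curve_length gam s) has_real_derivative
            - integral {0..2*pi} (\<lambda>u. curvature gam t u * psi1 gam \<theta> t u * speed gam t u))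
           (at t within {0..<tbar}) \<and>
         ((\<lambda>s. traj_area gam s) has_real_derivative
            integral {0..2*pi} (\<lambda>u. curvature gam t u * speed gam t u))
           (at t within {0..<tbar})"
proof -
  interpret framed_flow tbar gam \<theta> \<upsilon>
    by unfold_locales (rule assms(1))
  show ?thesis
    using curve_length_has_derivative[OF assms(2)] traj_area_has_derivative[OF assms(2)] by simp
qed

end
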